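(* For the $b$-coupled spin-oscillator $F=(L,H)$, the only singular points (points where $dF$ has rank $<2$) are the two points $N=((0,0,1),(0,0))$ and $S=((0,0,-1),(0,0))$ of $S^2\times\mathbb R^2$. Both are fixed points ($dL=dH=0$), both are non-degenerate and of focus-focus type, and $dF$ has rank $2$ at every other point of $M$ (there are no singular points of rank $1$).
   Context: Fix constants $\rho_1,\rho_2>0$. Let $M=S^2\times\mathbb R^2$, where $S^2\subset\mathbb R^3$ is the unit sphere with coordinates $(x,y,z)$, $x^2+y^2+z^2=1$, and $(u,v)$ are coordinates on $\mathbb R^2$; let $Z=\{z=0\}\times\mathbb R^2$. On $\{|z|<1\}$ use cylindrical coordinates $(\theta,z)$ with $\theta=\arg(x+iy)$; on $\{z\neq0\}$ use $(x,y)$ as coordinates on each open hemisphere. The $b$-symplectic form is $\omega=-\rho_1\,\omega^b_{S^2}+\rho_2\,du\wedge dv$, where $\omega^b_{S^2}=d\theta\wedge\frac{dz}{z}$ on $\{|z|<1\}$ and $\omega^b_{S^2}=\frac{1}{1-x^2-y^2}dx\wedge dy$ on $\{z\ne0\}$. The $b$-coupled spin-oscillator is $F=(L,H)$ with $L=\rho_1\log|z|+\frac{\rho_2}{2}(u^2+v^2)$ and $H=\frac12(xu+yv)$; differentials are taken as $b$-forms. A fixed point $p$ (located away from $Z$) with $\Omega$ the matrix of $\omega$ at $p$ is non-degenerate if the operators $A_L=\Omega^{-1}d^2L(p)$, $A_H=\Omega^{-1}d^2H(p)$ span a Cartan subalgebra of $\mathfrak{sp}(4,\mathbb R)$ (in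 particular $d^2L(p),d^2H(p)$ are linearly independent and some combination $c_1A_L+c_2A_H$ has four distinct eigenvalues); it is of focus-focus type if such a combination has eigenvalues $\pm\alpha\pm i\beta$ with $\alpha,\beta\in\mathbb R\setminus\{0\}$, and of elliptic-elliptic type if they are $\pm i\alpha,\pm i\beta$ with $\alpha\ne\beta$ nonzero reals. *)

theory Defs
  imports "HOL-Analysis.Analysis"
begin

(* Points of M = S^2 x R^2 are 5-tuples (x,y,z,u,v) with x^2+y^2+z^2 = 1. *)
type_synonym pt = "real \<times> real \<times> real \<times> real \<times> real"

definition M :: "pt set" where
  "M = {(x,y,z,u,v). x^2 + y^2 + z^2 = 1}"

definition Npt :: pt where "Npt = (0,0,1,0,0)"
definition Spt :: pt where "Spt = (0,0,-1,0,0)"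

definition Lfun :: "real \<Rightarrow> real \<Rightarrow> pt \<Rightarrow> real" where
  "Lfun \<rho>1 \<rho>2 = (\<lambda>(x,y,z,u,v). \<rho>1 * ln \<bar>z\<bar> + \<rho>2 / 2 * (u^2 + v^2))"

definition Hfun :: "pt \<Rightarrow> real" where
  "Hfun = (\<lambda>(x,y,z,u,v). (x * u + y * v) / 2)"

definition partial :: "(real^4 \<Rightarrow> real) \<Rightarrow> real^4 \<Rightarrow> 4 \<Rightarrow> real" where
  "partial f q i = deriv (\<lambda>t. f (q + (t - q$i) *\<^sub>R axis i 1)) (q$i)"

(* cylindrical chart (theta, z, u, v) on {|z| < 1} *)
definition cyl :: "(pt \<Rightarrow> real) \<Rightarrow> real^4 \<Rightarrow> real" where
  "cyl f q = f (sqrt (1 - (q$2)^2) * cos (q$1), sqrt (1 - (q$2)^2) * sin (q$1), q$2, q$3, q$4)"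

definition cyl_coords :: "pt \<Rightarrow> real^4" where
  "cyl_coords = (\<lambda>(x,y,z,u,v). vector [Arg (Complex x y), z, u, v])"

(* hemisphere chart (x, y, u, v) on {z > 0} (s = 1) and {z < 0} (s = -1) *)
definition hem :: "real \<Rightarrow> (pt \<Rightarrow> real) \<Rightarrow> real^4 \<Rightarrow> real" where
  "hem s f q = f (q$1, q$2, s * sqrt (1 - (q$1)^2 - (q$2)^2), q$3, q$4)"

definition hem_coords :: "pt \<Rightarrow> real^4" where
  "hem_coords = (\<lambda>(x,y,z,u,v). vector [x, y, u, v])"

definition zc :: "pt \<Rightarrow> real" where "zc = (\<lambda>(x,y,z,u,v). z)"

(* coefficients of the b-differential df at p.
   Away from Z: ordinary differential in the chart (x,y,u,v), basis dx,dy,du,dv.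
   On Z: b-cotangent basis d theta, dz/z, du, dv of the cylindrical chart; the coefficients
   (d_theta f, z d_z f, d_u f, d_v f), smooth as b-form coefficients, are evaluated at Z as
   their (continuous) limit from the complement of Z. *)
definition bpart_cyl :: "(pt \<Rightarrow> real) \<Rightarrow> real^4 \<Rightarrow> 4 \<Rightarrow> real" where
  "bpart_cyl f q i = (if i = 2 then q$2 * partial (cyl f) q i else partial (cyl f) q i)"

definition bdiff :: "(pt \<Rightarrow> real) \<Rightarrow> pt \<Rightarrow> real^4" where
  "bdiff f p =
     (if zc p = 0
      then (\<chi> i. Lim (at (cyl_coords p) within {q. q$2 \<noteq> 0}) (\<lambda>q. bpart_cyl f q i))
      else (\<chi> i. partial (hem (sgn (zc p)) f) (hem_coords p) i))"

definition rank_dF :: "real \<Rightarrow> real \<Rightarrow> pt \<Rightarrow> nat" where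
  "rank_dF \<rho>1 \<rho>2 p = rank (vector [bdiff (Lfun \<rho>1 \<rho>2) p, bdiff Hfun p] :: real^4^2)"

definition fixed_point :: "real \<Rightarrow> real \<Rightarrow> pt \<Rightarrow> bool" where
  "fixed_point \<rho>1 \<rho>2 p \<longleftrightarrow> bdiff (Lfun \<rho>1 \<rho>2) p = 0 \<and> bdiff Hfun p = 0"

definition hess :: "(pt \<Rightarrow> real) \<Rightarrow> pt \<Rightarrow> real^4^4" where
  "hess f p = (\<chi> i j. partial (\<lambda>q. partial (hem (sgn (zc p)) f) q j) (hem_coords p) i)"

(* matrix of omega = -rho1 omega^b_{S^2} + rho2 du/\dv at p (p not in Z), chart (x,y,u,v),
   Omega i j = omega(e_i, e_j), with omega^b_{S^2} = 1/(1-x^2-y^2) dx/\dy *)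
definition Omega :: "real \<Rightarrow> real \<Rightarrow> pt \<Rightarrow> real^4^4" where
  "Omega \<rho>1 \<rho>2 = (\<lambda>(x,y,z,u,v). let c = - \<rho>1 / (1 - x^2 - y^2) in
     vector [vector [0, c, 0, 0], vector [-c, 0, 0, 0],
             vector [0, 0, 0, \<rho>2], vector [0, 0, -\<rho>2, 0]])"

definition sp :: "real^4^4 \<Rightarrow> (real^4^4) set" where
  "sp W = {A. transpose A ** W + W ** A = 0}"

definition lie_br :: "real^4^4 \<Rightarrow> real^4^4 \<Rightarrow> real^4^4" where
  "lie_br A B = A ** B - B ** A"

primrec lcs :: "(real^4^4) set \<Rightarrow> nat \<Rightarrow> (real^4^4) set" where
  "lcs h 0 = h"
| "lcs h (Suc k) = span {lie_br X Y | X Y. X \<in> h \<and> Y \<in> lcs h k}"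

definition cartan_subalgebra :: "(real^4^4) set \<Rightarrow> (real^4^4) set \<Rightarrow> bool" where
  "cartan_subalgebra g h \<longleftrightarrow>
     subspace h \<and> h \<subseteq> g \<and> (\<forall>X\<in>h. \<forall>Y\<in>h. lie_br X Y \<in> h)
     \<and> (\<exists>k. lcs h k = {0})
     \<and> {X \<in> g. \<forall>Y\<in>h. lie_br X Y \<in> h} = h"

definition A_op :: "real^4^4 \<Rightarrow> real^4^4 \<Rightarrow> real^4^4" where
  "A_op W S = matrix_inv W ** S"

definition nondegenerate :: "real \<Rightarrow> real \<Rightarrow> pt \<Rightarrow> bool" where
  "nondegenerate \<rho>1 \<rho>2 p \<longleftrightarrow>
     cartan_subalgebra (sp (Omega \<rho>1 \<rho>2 p))
       (span {A_op (Omega \<rho>1 \<rho>2 p) (hess (Lfun \<rho>1 \<rho>2) p),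
              A_op (Omega \<rho>1 \<rho>2 p) (hess Hfun p)})"

definition eigenvals :: "real^4^4 \<Rightarrow> complex set" where
  "eigenvals A = {e. \<exists>w :: complex^4. w \<noteq> 0 \<and>
      (\<chi> i. \<Sum>j\<in>UNIV. complex_of_real (A$i$j) * w$j) = (\<chi> i. e * w$i)}"

definition focus_focus :: "real \<Rightarrow> real \<Rightarrow> pt \<Rightarrow> bool" where
  "focus_focus \<rho>1 \<rho>2 p \<longleftrightarrow> nondegenerate \<rho>1 \<rho>2 p \<and>
     (\<exists>c1 c2 \<alpha> \<beta>. \<alpha> \<noteq> 0 \<and> \<beta> \<noteq> 0 \<and>
        eigenvals (c1 *\<^sub>R A_op (Omega \<rho>1 \<rho>2 p) (hess (Lfun \<rho>1 \<rho>2) p)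
                 + c2 *\<^sub>R A_op (Omega \<rho>1 \<rho>2 p) (hess Hfun p))
        = {Complex \<alpha> \<beta>, Complex \<alpha> (-\<beta>), Complex (-\<alpha>) \<beta>, Complex (-\<alpha>) (-\<beta>)})"

end

theory Submission
  imports Defs
begin

text \<open>
  Away from the equator Z both functions are computed in the hemisphere chart (x,y,u,v), where
  L = \<rho>1/2 ln(1 - x^2 - y^2) + \<rho>2/2 (u^2 + v^2) and H = (xu + yv)/2. A relation a dL + b dH = 0
  with (a,b) \<noteq> 0 forces x (4 a^2 \<rho>1 \<rho>2 + b^2 z^2) = 0, and likewise for y, u and v, so it
  only occurs at the poles, where both differentials vanish. On Z the dz/z-coefficient of dL
  is \<rho>1 while that of dH vanishes, and the du, dv-coefficients of dH are (cos \<theta>, sin \<theta>)/2 \<noteq> 0.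
  At a pole the operators A_L = \<Omega>^-1 d^2L and A_H = \<Omega>^-1 d^2H commute and span their own
  normalizer in sp(\<Omega>), and A_L + 2 sqrt(\<rho>1 \<rho>2) A_H has the eigenvalues \<plusminus>1 \<plusminus> i.
\<close>

lemma vector_4_nth [simp]:
  "(vector [a,b,c,d] :: ('a::zero)^4) $ 1 = a"
  "(vector [a,b,c,d] :: ('a::zero)^4) $ 2 = b"
  "(vector [a,b,c,d] :: ('a::zero)^4) $ 3 = c"
  "(vector [a,b,c,d] :: ('a::zero)^4) $ 4 = d"
  unfolding vector_def by simp_all

lemma axis_4_nth [simp]:
  "(axis (1::4) (1::real))$1 = 1" "(axis (1::4) (1::real))$2 = 0" "(axis (1::4) (1::real))$3 = 0" "(axis (1::4) (1::real))$4 = 0"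
  "(axis (2::4) (1::real))$1 = 0" "(axis (2::4) (1::real))$2 = 1" "(axis (2::4) (1::real))$3 = 0" "(axis (2::4) (1::real))$4 = 0"
  "(axis (3::4) (1::real))$1 = 0" "(axis (3::4) (1::real))$2 = 0" "(axis (3::4) (1::real))$3 = 1" "(axis (3::4) (1::real))$4 = 0"
  "(axis (4::4) (1::real))$1 = 0" "(axis (4::4) (1::real))$2 = 0" "(axis (4::4) (1::real))$3 = 0" "(axis (4::4) (1::real))$4 = 1"
  by (simp_all add: axis_def)

lemma has_derivative_vec_nth [derivative_intros]:
  "((\<lambda>x::real^'n. x$i) has_derivative (\<lambda>h. h$i)) (at q within S)"
  by (rule bounded_linear_imp_has_derivative[OF bounded_linear_vec_nth])

lemma partial_eq_derivative_axis:
  assumes "(g has_derivative g') (at q)" and "open S" "q \<in> S"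
    and "\<And>y. y \<in> S \<Longrightarrow> f y = g y"
  shows "partial f q i = g' (axis i 1)"
proof -
  have df: "(f has_derivative g') (at q)"
    using has_derivative_transform_within_open assms by metis
  have line: "((\<lambda>t. q + (t - q$i) *\<^sub>R axis i 1) has_derivative (\<lambda>h. h *\<^sub>R axis i (1::real))) (at (q$i))"
    by (auto intro!: derivative_eq_intros)
  have "((\<lambda>t. f (q + (t - q$i) *\<^sub>R axis i 1)) has_derivative (\<lambda>h. g' (h *\<^sub>R axis i 1))) (at (q$i))"
    using diff_chain_at[OF line, of f] df by (simp add: o_def)
  moreover have "(\<lambda>h. g' (h *\<^sub>R axis i 1)) = (*) (g' (axis i 1))"
    using has_derivative_linear[OF assms(1)] by (auto simp: linear_cmul mult.commute)
  ultimately have "((\<lambda>t. f (q + (t - q$i) *\<^sub>R axis i 1)) has_field_derivative g' (axis i 1)) (at (q$i))"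
    by (simp add: has_field_derivative_def)
  then show ?thesis unfolding partial_def by (rule DERIV_imp_deriv)
qed

lemma Lim_within_eventually_eq:
  assumes "\<not> trivial_limit (at c within S)"
    and "eventually (\<lambda>q. f q = g q) (at c within S)" and "isCont g c"
  shows "Lim (at c within S) f = g c"
proof -
  have "(g \<longlongrightarrow> g c) (at c within S)"
    using assms(3) by (simp add: isCont_def tendsto_within_subset[of _ _ _ UNIV])
  then have "(f \<longlongrightarrow> g c) (at c within S)"
    using tendsto_cong[OF assms(2)] by simp
  then show ?thesis using tendsto_Lim[OF assms(1)] by blast
qed

lemma trivial_limit_at_off_hyperplane:
  fixes c :: "real^'n"
  assumes "c$k = 0"
  shows "\<not> trivial_limit (at c within {q. q$k \<noteq> 0})"
  unfolding trivial_limit_within islimpt_approachable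
proof (intro notI, elim notE, intro allI impI)
  fix e :: real assume e: "e > 0"
  let ?x = "c + (e/2) *\<^sub>R axis k 1"
  have "?x $ k = e/2" "dist ?x c = e/2"
    using assms e by (simp_all add: dist_norm)
  then show "\<exists>x'\<in>{q. q$k \<noteq> 0}. x' \<noteq> c \<and> dist x' c < e"
    using e by (intro bexI[of _ ?x]) auto
qed

lemma eventually_at_component_near:
  fixes c :: "real^'n"
  shows "eventually (\<lambda>q. q \<in> S \<and> \<bar>q$k - c$k\<bar> < 1) (at c within S)"
proof -
  have "eventually (\<lambda>q. q \<in> S \<and> dist q c < 1) (at c within S)"
    by (auto simp: eventually_at intro!: exI[of _ 1])
  then show ?thesis
    by (rule eventually_mono)
      (metis component_le_norm_cart dist_norm order_le_less_trans vector_minus_component)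
qed

definition hem_domain :: "(real^4) set" where
  "hem_domain = {q. (q$1)^2 + (q$2)^2 < 1}"

lemma open_hem_domain: "open hem_domain"
  unfolding hem_domain_def by (auto intro!: open_Collect_less continuous_intros)

lemma hem_coords_in_hem_domain:
  assumes "p \<in> M" "zc p \<noteq> 0"
  shows "hem_coords p \<in> hem_domain"
proof -
  obtain x y z u v where p: "p = (x,y,z,u,v)" by (cases p) auto
  have "z^2 > 0" "x^2 + y^2 + z^2 = 1" using assms by (simp_all add: p zc_def M_def)
  then have "x^2 + y^2 < 1" by linarith
  then show ?thesis by (simp add: p hem_coords_def hem_domain_def)
qed

lemma sgn_eq_1_or_minus_1: "(a::real) \<noteq> 0 \<Longrightarrow> sgn a = 1 \<or> sgn a = -1"
  by (auto simp: sgn_if)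

lemma hem_Lfun:
  assumes "s = 1 \<or> s = -1" "q \<in> hem_domain"
  shows "hem s (Lfun r1 r2) q = r1 / 2 * ln (1 - (q$1)^2 - (q$2)^2) + r2 / 2 * ((q$3)^2 + (q$4)^2)"
proof -
  have pos: "1 - (q$1)^2 - (q$2)^2 > 0" using assms(2) by (simp add: hem_domain_def)
  have "\<bar>s * sqrt (1 - (q$1)^2 - (q$2)^2)\<bar> = sqrt (1 - (q$1)^2 - (q$2)^2)"
    using assms(1) pos by auto
  then show ?thesis using pos by (simp add: hem_def Lfun_def ln_sqrt)
qed

lemma hem_Hfun: "hem s Hfun q = (q$1 * q$3 + q$2 * q$4) / 2"
  by (simp add: hem_def Hfun_def)

definition dL_hem :: "real \<Rightarrow> real \<Rightarrow> real^4 \<Rightarrow> real^4 \<Rightarrow> real" where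
  "dL_hem r1 r2 q h = - r1 * (q$1 * h$1 + q$2 * h$2) / (1 - (q$1)^2 - (q$2)^2)
     + r2 * (q$3 * h$3 + q$4 * h$4)"

definition dH_hem :: "real^4 \<Rightarrow> real^4 \<Rightarrow> real" where
  "dH_hem q h = (h$1 * q$3 + q$1 * h$3 + h$2 * q$4 + q$2 * h$4) / 2"

lemma hem_Lfun_has_derivative:
  assumes "q \<in> hem_domain"
  shows "((\<lambda>q. r1 / 2 * ln (1 - (q$1)^2 - (q$2)^2) + r2 / 2 * ((q$3)^2 + (q$4)^2))
           has_derivative dL_hem r1 r2 q) (at q)"
proof -
  have pos: "1 - (q$1)^2 - (q$2)^2 > 0" using assms by (simp add: hem_domain_def)
  then show ?thesis
    by (auto intro!: derivative_eq_intros ext simp: dL_hem_def field_simps)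
qed

lemma hem_Hfun_has_derivative:
  "((\<lambda>q::real^4. (q$1 * q$3 + q$2 * q$4) / 2) has_derivative dH_hem q) (at q)"
  by (auto intro!: derivative_eq_intros ext simp: dH_hem_def field_simps)

lemma partial_hem_Lfun:
  assumes "s = 1 \<or> s = -1" "q \<in> hem_domain"
  shows "partial (hem s (Lfun r1 r2)) q i = dL_hem r1 r2 q (axis i 1)"
  using assms hem_Lfun
  by (intro partial_eq_derivative_axis[OF hem_Lfun_has_derivative open_hem_domain]) blast+

lemma partial_hem_Hfun: "partial (hem s Hfun) q i = dH_hem q (axis i 1)"
  by (rule partial_eq_derivative_axis[OF hem_Hfun_has_derivative open_UNIV UNIV_I])
    (simp add: hem_Hfun)

lemma bdiff_Lfun_off_equator:
  assumes "p \<in> M" "zc p \<noteq> 0"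
  shows "bdiff (Lfun r1 r2) p $ i = dL_hem r1 r2 (hem_coords p) (axis i 1)"
  using assms partial_hem_Lfun[OF sgn_eq_1_or_minus_1 hem_coords_in_hem_domain]
  by (simp add: bdiff_def)

lemma bdiff_Hfun_off_equator:
  assumes "zc p \<noteq> 0"
  shows "bdiff Hfun p $ i = dH_hem (hem_coords p) (axis i 1)"
  using assms by (simp add: bdiff_def partial_hem_Hfun)

subsection \<open>The b-differentials on the equator\<close>

lemma cyl_Hfun: "cyl Hfun q = sqrt (1 - (q$2)^2) * (cos (q$1) * q$3 + sin (q$1) * q$4) / 2"
  by (simp add: cyl_def Hfun_def algebra_simps)

lemma cyl_Lfun: "cyl (Lfun r1 r2) q = r1 * ln \<bar>q$2\<bar> + r2 / 2 * ((q$3)^2 + (q$4)^2)"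
  by (simp add: cyl_def Lfun_def)

definition dH_cyl :: "real^4 \<Rightarrow> real^4 \<Rightarrow> real" where
  "dH_cyl q h = (- q$2 * h$2 / sqrt (1 - (q$2)^2) * (cos (q$1) * q$3 + sin (q$1) * q$4)
     + sqrt (1 - (q$2)^2) * (- sin (q$1) * h$1 * q$3 + cos (q$1) * h$3
                              + cos (q$1) * h$1 * q$4 + sin (q$1) * h$4)) / 2"

lemma cyl_Hfun_has_derivative:
  assumes "\<bar>q$2\<bar> < 1"
  shows "(cyl Hfun has_derivative dH_cyl q) (at q)"
proof -
  have pos: "1 - (q$2)^2 > 0" using assms by (simp add: abs_square_less_1)
  then have "sqrt (1 - (q$2)^2) \<noteq> 0" by simp
  with pos show ?thesis
    unfolding cyl_Hfun[abs_def]
    by (auto intro!: derivative_eq_intros ext simp: dH_cyl_def field_simps)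
qed

lemma partial_cyl_Hfun:
  assumes "\<bar>q$2\<bar> < 1"
  shows "partial (cyl Hfun) q i = dH_cyl q (axis i 1)"
  by (rule partial_eq_derivative_axis[OF cyl_Hfun_has_derivative[OF assms] open_UNIV UNIV_I]) simp

lemma partial_cyl_Lfun_2:
  assumes "q$2 \<noteq> 0"
  shows "partial (cyl (Lfun r1 r2)) q 2 = r1 / q$2"
proof -
  define s where "s = sgn (q$2)"
  have s: "s * q$2 > 0" using assms by (simp add: s_def sgn_if)
  have d: "((\<lambda>q::real^4. r1 * ln (s * q$2) + r2 / 2 * ((q$3)^2 + (q$4)^2)) has_derivative
       (\<lambda>h. r1 * h$2 / q$2 + r2 * (q$3 * h$3 + q$4 * h$4))) (at q)"
    using s by (auto intro!: derivative_eq_intros ext simp: field_simps)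
  have "open {q'::real^4. s * q'$2 > 0}"
    by (auto intro!: open_Collect_less continuous_intros)
  moreover have "\<bar>q'$2\<bar> = s * q'$2" if "s * q'$2 > 0" for q' :: "real^4"
    using that by (auto simp: s_def sgn_if)
  ultimately show ?thesis
    using partial_eq_derivative_axis[OF d, of "{q'. s * q'$2 > 0}" "cyl (Lfun r1 r2)" 2] s
    by (simp add: cyl_Lfun)
qed

lemma bdiff_on_equator:
  assumes "zc p = 0"
  shows "bdiff (Lfun r1 r2) p $ 2 = r1"
    and "bdiff Hfun p $ 2 = 0"
    and "bdiff Hfun p $ 3 = cos (cyl_coords p $ 1) / 2"
    and "bdiff Hfun p $ 4 = sin (cyl_coords p $ 1) / 2"
proof -
  define c where "c = cyl_coords p"
  have c2: "c$2 = 0" using assms by (cases p) (auto simp: c_def cyl_coords_def zc_def)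
  have bdiff_Lim: "bdiff f p $ i = Lim (at c within {q. q$2 \<noteq> 0}) (\<lambda>q. bpart_cyl f q i)" for f i
    using assms by (simp add: bdiff_def c_def)
  have near: "eventually (\<lambda>q. q$2 \<noteq> 0 \<and> \<bar>q$2\<bar> < 1) (at c within {q. q$2 \<noteq> 0})"
    using eventually_at_component_near[of "{q. q$2 \<noteq> 0}" 2 c] c2 by simp
  have limit: "bdiff f p $ i = g c"
    if "\<And>q. q$2 \<noteq> 0 \<Longrightarrow> \<bar>q$2\<bar> < 1 \<Longrightarrow> bpart_cyl f q i = g q" "isCont g c" for f i g
    unfolding bdiff_Lim using that
    by (intro Lim_within_eventually_eq trivial_limit_at_off_hyperplane c2
        eventually_mono[OF near]) auto
  show "bdiff (Lfun r1 r2) p $ 2 = r1"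
    by (rule limit[where g = "\<lambda>_. r1"]) (simp_all add: bpart_cyl_def partial_cyl_Lfun_2)
  have "bdiff Hfun p $ 2
      = (\<lambda>q. q$2 * (- q$2 / sqrt (1 - (q$2)^2) * (cos (q$1) * q$3 + sin (q$1) * q$4)) / 2) c"
    using c2 by (intro limit) (auto simp: bpart_cyl_def partial_cyl_Hfun dH_cyl_def intro!: continuous_intros)
  then show "bdiff Hfun p $ 2 = 0" using c2 by simp
  have "bdiff Hfun p $ 3 = (\<lambda>q. sqrt (1 - (q$2)^2) * cos (q$1) / 2) c"
    by (intro limit) (auto simp: bpart_cyl_def partial_cyl_Hfun dH_cyl_def intro!: continuous_intros)
  then show "bdiff Hfun p $ 3 = cos (cyl_coords p $ 1) / 2" using c2 by (simp add: c_def)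
  have "bdiff Hfun p $ 4 = (\<lambda>q. sqrt (1 - (q$2)^2) * sin (q$1) / 2) c"
    by (intro limit) (auto simp: bpart_cyl_def partial_cyl_Hfun dH_cyl_def intro!: continuous_intros)
  then show "bdiff Hfun p $ 4 = sin (cyl_coords p $ 1) / 2" using c2 by (simp add: c_def)
qed

lemma rank_two_rows_eq_2_iff:
  "rank (vector [r, s] :: real^'n^2) = 2 \<longleftrightarrow> (\<forall>a b. a *\<^sub>R r + b *\<^sub>R s = 0 \<longrightarrow> a = 0 \<and> b = 0)"
proof -
  let ?A = "vector [r, s] :: real^'n^2"
  have tv: "transpose ?A *v x = x$1 *\<^sub>R r + x$2 *\<^sub>R s" for x
    by (simp add: vec_eq_iff matrix_vector_mult_def transpose_def sum_2 mult.commute)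
  have nz: "x \<noteq> 0 \<longleftrightarrow> x$1 \<noteq> 0 \<or> x$2 \<noteq> 0" for x :: "real^2"
    by (auto simp: vec_eq_iff forall_2)
  have "rank ?A = 2 \<longleftrightarrow> rank (transpose ?A) = CARD(2)" by (simp add: rank_transpose)
  also have "\<dots> \<longleftrightarrow> \<not> (\<exists>x. x \<noteq> 0 \<and> transpose ?A *v x = 0)"
    using matrix_nonfull_linear_equations_eq[of "transpose ?A"] by blast
  also have "\<dots> \<longleftrightarrow> (\<forall>a b. a *\<^sub>R r + b *\<^sub>R s = 0 \<longrightarrow> a = 0 \<and> b = 0)"
  proof
    assume h: "\<not> (\<exists>x. x \<noteq> 0 \<and> transpose ?A *v x = 0)"
    show "\<forall>a b. a *\<^sub>R r + b *\<^sub>R s = 0 \<longrightarrow> a = 0 \<and> b = 0"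
    proof (intro allI impI)
      fix a b assume "a *\<^sub>R r + b *\<^sub>R s = 0"
      then have "transpose ?A *v vector [a, b] = 0" using tv[of "vector [a, b]"] by simp
      then show "a = 0 \<and> b = 0" using h nz[of "vector [a, b]"] by auto
    qed
  next
    assume "\<forall>a b. a *\<^sub>R r + b *\<^sub>R s = 0 \<longrightarrow> a = 0 \<and> b = 0"
    then show "\<not> (\<exists>x. x \<noteq> 0 \<and> transpose ?A *v x = 0)"
      using tv nz by metis
  qed
  finally show ?thesis .
qed

lemma pole_coords:
  assumes "p \<in> {Npt, Spt}"
  shows "p \<in> M" "zc p \<noteq> 0" "hem_coords p = 0"
  using assms by (auto simp: Npt_def Spt_def M_def zc_def hem_coords_def vec_eq_iff forall_4)

lemma bdiff_at_pole:
  assumes "p \<in> {Npt, Spt}"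
  shows "bdiff (Lfun r1 r2) p = 0" "bdiff Hfun p = 0"
  using bdiff_Lfun_off_equator[OF pole_coords(1,2)] bdiff_Hfun_off_equator[OF pole_coords(2)]
    pole_coords(3) assms
  by (simp_all add: vec_eq_iff dL_hem_def dH_hem_def)

lemma rank_dF_at_pole:
  assumes "p \<in> {Npt, Spt}"
  shows "rank_dF r1 r2 p = 0"
proof -
  have "(vector [0, 0] :: real^4^2) = 0" by (simp add: vec_eq_iff forall_2)
  then show ?thesis using bdiff_at_pole[OF assms] by (simp add: rank_dF_def)
qed

lemma rank_dF_on_equator:
  assumes "r1 > 0" "zc p = 0"
  shows "rank_dF r1 r2 p = 2"
  unfolding rank_dF_def rank_two_rows_eq_2_iff
proof (intro allI impI)
  fix a b assume rel: "a *\<^sub>R bdiff (Lfun r1 r2) p + b *\<^sub>R bdiff Hfun p = 0"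
  let ?\<theta> = "cyl_coords p $ 1"
  note coeffs = bdiff_on_equator[OF assms(2)]
  have "a * r1 = 0" using arg_cong[OF rel, of "\<lambda>v. v$2"] coeffs by simp
  then have a: "a = 0" using assms(1) by simp
  have "b * cos ?\<theta> = 0" "b * sin ?\<theta> = 0"
    using arg_cong[OF rel, of "\<lambda>v. v$3"] arg_cong[OF rel, of "\<lambda>v. v$4"] coeffs a by simp_all
  then have "b = 0" using sin_cos_squared_add[of ?\<theta>] by (cases "b = 0") auto
  with a show "a = 0 \<and> b = 0" ..
qed

lemma dependent_coordinate_pair_vanishes:
  fixes a b r1 r2 w x u :: real
  assumes "r1 > 0" "r2 > 0" "w > 0" "a \<noteq> 0 \<or> b \<noteq> 0"
    and rel1: "b * u * w = 2 * a * r1 * x" and rel2: "b * x = - 2 * a * r2 * u"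
  shows "x = 0 \<and> u = 0"
proof -
  have pos: "4 * a^2 * r1 * r2 + b^2 * w > 0"
    using assms(1-4) by (cases "a = 0") (auto intro: add_pos_nonneg)
  have "x * (4 * a^2 * r1 * r2 + b^2 * w) = 2 * a * r2 * (2 * a * r1 * x - b * u * w) + b * w * (b * x + 2 * a * r2 * u)"
    by (simp add: algebra_simps power2_eq_square)
  then have x: "x = 0" using rel1 rel2 pos by simp
  then have "b * u * w = 0" "a * r2 * u = 0" using rel1 rel2 by simp_all
  then have "u = 0" using assms(2-4) by auto
  with x show ?thesis ..
qed

lemma rank_dF_off_equator:
  assumes r1: "r1 > 0" and r2: "r2 > 0" and "p \<in> M" "zc p \<noteq> 0" "p \<notin> {Npt, Spt}"
  shows "rank_dF r1 r2 p = 2"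
  unfolding rank_dF_def rank_two_rows_eq_2_iff
proof (intro allI impI)
  fix a b assume rel: "a *\<^sub>R bdiff (Lfun r1 r2) p + b *\<^sub>R bdiff Hfun p = 0"
  obtain x y z u v where p: "p = (x,y,z,u,v)" by (cases p) auto
  have sphere: "x^2 + y^2 + z^2 = 1" and "z \<noteq> 0" using assms(3,4) by (simp_all add: p M_def zc_def)
  then have w: "1 - x^2 - y^2 > 0" using zero_less_power2[of z] by linarith
  have rel_i: "a * dL_hem r1 r2 (vector [x,y,u,v]) (axis i 1) + b * dH_hem (vector [x,y,u,v]) (axis i 1) = 0" for i
    using arg_cong[OF rel, of "\<lambda>v. v$i"] bdiff_Lfun_off_equator[OF assms(3,4)]
      bdiff_Hfun_off_equator[OF assms(4)]
    by (simp add: p hem_coords_def)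
  have "b * u * (1 - x^2 - y^2) = 2 * a * r1 * x" "b * v * (1 - x^2 - y^2) = 2 * a * r1 * y"
    using rel_i[of 1] rel_i[of 2] w by (simp_all add: dL_hem_def dH_hem_def divide_simps)
  moreover have "b * x = - 2 * a * r2 * u" "b * y = - 2 * a * r2 * v"
    using rel_i[of 3] rel_i[of 4] by (simp_all add: dL_hem_def dH_hem_def field_simps)
  ultimately have "a \<noteq> 0 \<or> b \<noteq> 0 \<Longrightarrow> x = 0 \<and> y = 0 \<and> u = 0 \<and> v = 0"
    using dependent_coordinate_pair_vanishes[OF r1 r2 w] by blast
  moreover have "x = 0 \<Longrightarrow> y = 0 \<Longrightarrow> z = 1 \<or> z = -1"
    using sphere by (simp add: power2_eq_1_iff)
  ultimately show "a = 0 \<and> b = 0"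
    using assms(5) by (auto simp: p Npt_def Spt_def)
qed

subsection \<open>The linearised flows at the poles\<close>

lemma hess_Lfun_at_pole:
  assumes "p \<in> {Npt, Spt}"
  shows "hess (Lfun r1 r2) p = vector [vector [-r1, 0, 0, 0], vector [0, -r1, 0, 0],
                                         vector [0, 0, r2, 0], vector [0, 0, 0, r2]]"
proof -
  have s: "sgn (zc p) = 1 \<or> sgn (zc p) = -1" using sgn_eq_1_or_minus_1 pole_coords(2)[OF assms] .
  have inner: "partial (hem (sgn (zc p)) (Lfun r1 r2)) q j = dL_hem r1 r2 q (axis j 1)"
    if "q \<in> hem_domain" for q j
    using partial_hem_Lfun[OF s that] .
  have d: "((\<lambda>q. dL_hem r1 r2 q (axis j 1)) has_derivative
      (\<lambda>h. - r1 * (h$1 * axis j 1 $ 1 + h$2 * axis j 1 $ 2)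
            + r2 * (h$3 * axis j 1 $ 3 + h$4 * axis j 1 $ 4))) (at 0)" for j
    unfolding dL_hem_def by (auto intro!: derivative_eq_intros ext simp: field_simps)
  have entries: "hess (Lfun r1 r2) p $ i $ j =
      - r1 * (axis i 1 $ 1 * axis j 1 $ 1 + axis i 1 $ 2 * axis j 1 $ 2)
      + r2 * (axis i 1 $ 3 * axis j 1 $ 3 + axis i 1 $ 4 * axis j 1 $ 4)" for i j
    unfolding hess_def pole_coords(3)[OF assms] vec_lambda_beta
    using inner by (intro partial_eq_derivative_axis[OF d open_hem_domain]) (auto simp: hem_domain_def)
  show ?thesis by (simp add: entries vec_eq_iff forall_4)
qed

lemma hess_Hfun_at_pole:
  assumes "p \<in> {Npt, Spt}"
  shows "hess Hfun p = vector [vector [0, 0, 1/2, 0], vector [0, 0, 0, 1/2],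
                                vector [1/2, 0, 0, 0], vector [0, 1/2, 0, 0]]"
proof -
  have d: "((\<lambda>q. dH_hem q (axis j 1)) has_derivative
      (\<lambda>h. (axis j 1 $ 1 * h$3 + h$1 * axis j 1 $ 3 + axis j 1 $ 2 * h$4 + h$2 * axis j 1 $ 4) / 2))
      (at 0)" for j
    unfolding dH_hem_def by (auto intro!: derivative_eq_intros ext simp: field_simps)
  have entries: "hess Hfun p $ i $ j =
      (axis j 1 $ 1 * axis i 1 $ 3 + axis i 1 $ 1 * axis j 1 $ 3
       + axis j 1 $ 2 * axis i 1 $ 4 + axis i 1 $ 2 * axis j 1 $ 4) / 2" for i j
    unfolding hess_def pole_coords(3)[OF assms] vec_lambda_beta
    by (intro partial_eq_derivative_axis[OF d open_UNIV UNIV_I]) (simp add: partial_hem_Hfun)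
  show ?thesis by (simp add: entries vec_eq_iff forall_4)
qed

definition Omega_pole :: "real \<Rightarrow> real \<Rightarrow> real^4^4" where
  "Omega_pole r1 r2 = vector [vector [0, -r1, 0, 0], vector [r1, 0, 0, 0],
                              vector [0, 0, 0, r2], vector [0, 0, -r2, 0]]"

definition A_L_pole :: "real^4^4" where
  "A_L_pole = vector [vector [0, -1, 0, 0], vector [1, 0, 0, 0],
                      vector [0, 0, 0, -1], vector [0, 0, 1, 0]]"

definition A_H_pole :: "real \<Rightarrow> real \<Rightarrow> real^4^4" where
  "A_H_pole r1 r2 = vector [vector [0, 0, 0, 1/(2*r1)], vector [0, 0, -1/(2*r1), 0],
                            vector [0, -1/(2*r2), 0, 0], vector [1/(2*r2), 0, 0, 0]]"

lemma Omega_at_pole: "p \<in> {Npt, Spt} \<Longrightarrow> Omega r1 r2 p = Omega_pole r1 r2"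
  by (auto simp: Omega_def Omega_pole_def Npt_def Spt_def)

lemma matrix_inv_eqI:
  fixes A B :: "'a::semiring_1^'n^'n"
  assumes "A ** B = mat 1" "B ** A = mat 1"
  shows "matrix_inv A = B"
proof -
  have "A ** matrix_inv A = mat 1 \<and> matrix_inv A ** A = mat 1"
    unfolding matrix_inv_def by (rule someI[of _ B]) (use assms in blast)
  then show ?thesis by (metis assms(1) matrix_mul_assoc matrix_mul_lid matrix_mul_rid)
qed

lemmas matrix_4_simps = vec_eq_iff forall_4 matrix_matrix_mult_def sum_4 mat_def transpose_def

lemma matrix_inv_Omega_pole:
  assumes "r1 > 0" "r2 > 0"
  shows "matrix_inv (Omega_pole r1 r2) =
    vector [vector [0, 1/r1, 0, 0], vector [-1/r1, 0, 0, 0],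
            vector [0, 0, 0, -1/r2], vector [0, 0, 1/r2, 0]]"
  using assms by (intro matrix_inv_eqI) (simp_all add: matrix_4_simps Omega_pole_def)

lemma A_op_at_pole:
  assumes "r1 > 0" "r2 > 0" "p \<in> {Npt, Spt}"
  shows "A_op (Omega r1 r2 p) (hess (Lfun r1 r2) p) = A_L_pole"
    and "A_op (Omega r1 r2 p) (hess Hfun p) = A_H_pole r1 r2"
  using assms
  by (simp_all add: A_op_def Omega_at_pole hess_Lfun_at_pole hess_Hfun_at_pole
      matrix_inv_Omega_pole matrix_4_simps A_L_pole_def A_H_pole_def)

subsection \<open>Non-degeneracy\<close>

lemma span_pair: "span {A, B :: 'a::real_vector} = {a *\<^sub>R A + b *\<^sub>R B | a b. True}"
proof -
  have "x \<in> span {A, B} \<longleftrightarrow> (\<exists>a b. x = a *\<^sub>R A + b *\<^sub>R B)" for x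
  proof -
    have "x \<in> span {A, B} \<longleftrightarrow> (\<exists>k kb. x - k *\<^sub>R A = kb *\<^sub>R B)"
      by (auto simp: span_breakdown_eq span_singleton)
    also have "\<dots> \<longleftrightarrow> (\<exists>a b. x = a *\<^sub>R A + b *\<^sub>R B)"
      by (metis add_diff_cancel_left' diff_add_cancel add.commute)
    finally show ?thesis .
  qed
  then show ?thesis by blast
qed

lemma cartan_subalgebra_if_abelian_self_normalizing:
  assumes "subspace h" "h \<subseteq> g"
    and abelian: "\<And>X Y. X \<in> h \<Longrightarrow> Y \<in> h \<Longrightarrow> lie_br X Y = 0"
    and self_normalizing: "\<And>X. X \<in> g \<Longrightarrow> (\<forall>Y\<in>h. lie_br X Y \<in> h) \<Longrightarrow> X \<in> h"
  shows "cartan_subalgebra g h"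
proof -
  have zero: "0 \<in> h" using assms(1) by (rule subspace_0)
  have "{lie_br X Y | X Y. X \<in> h \<and> Y \<in> lcs h 0} = {0}"
  proof
    show "{lie_br X Y | X Y. X \<in> h \<and> Y \<in> lcs h 0} \<subseteq> {0}" using abelian by auto
    show "{0} \<subseteq> {lie_br X Y | X Y. X \<in> h \<and> Y \<in> lcs h 0}"
      using abelian[OF zero zero] zero by force
  qed
  then have "lcs h 1 = {0}" by simp
  moreover have "{X \<in> g. \<forall>Y\<in>h. lie_br X Y \<in> h} = h"
    using assms(2) abelian self_normalizing zero by auto
  moreover have "\<forall>X\<in>h. \<forall>Y\<in>h. lie_br X Y \<in> h"
    using abelian zero by simp
  ultimately show ?thesis
    unfolding cartan_subalgebra_def using assms(1,2) by blast
qed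
lemma lie_br_span_A_pole:
  assumes "r1 > 0" "r2 > 0"
  shows "lie_br (a *\<^sub>R A_L_pole + b *\<^sub>R A_H_pole r1 r2) (c *\<^sub>R A_L_pole + d *\<^sub>R A_H_pole r1 r2) = 0"
  using assms by (simp add: lie_br_def matrix_4_simps A_L_pole_def A_H_pole_def field_simps)

lemma span_A_pole_in_sp:
  assumes "r1 > 0" "r2 > 0"
  shows "a *\<^sub>R A_L_pole + b *\<^sub>R A_H_pole r1 r2 \<in> sp (Omega_pole r1 r2)"
  using assms
  by (simp add: sp_def matrix_4_simps A_L_pole_def A_H_pole_def Omega_pole_def field_simps)

lemma sp_Omega_pole_entries:
  fixes X :: "real^4^4"
  assumes "X \<in> sp (Omega_pole r1 r2)"
  shows "X$2$2 * r1 + r1 * X$1$1 = 0" "r1 * X$1$3 = X$4$2 * r2" "X$3$3 * r2 + r2 * X$4$4 = 0"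
    "X$2$3 * r1 + r2 * X$4$1 = 0" "X$3$2 * r2 + r1 * X$1$4 = 0"
proof -
  have "transpose X ** Omega_pole r1 r2 + Omega_pole r1 r2 ** X = 0"
    using assms by (simp add: sp_def)
  then have S: "(transpose X ** Omega_pole r1 r2)$i$j + (Omega_pole r1 r2 ** X)$i$j = 0" for i j
    by (metis vector_add_component zero_index)
  show "X$2$2 * r1 + r1 * X$1$1 = 0" "r1 * X$1$3 = X$4$2 * r2" "X$3$3 * r2 + r2 * X$4$4 = 0"
    "X$2$3 * r1 + r2 * X$4$1 = 0" "X$3$2 * r2 + r1 * X$1$4 = 0"
    using S[of 1 2] S[of 1 3] S[of 3 4] S[of 2 4] S[of 3 2]
    by (simp_all add: matrix_matrix_mult_def sum_4 Omega_pole_def transpose_def algebra_simps)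
qed

lemma normalizer_A_pole:
  fixes X :: "real^4^4"
  assumes r1: "r1 > 0" and r2: "r2 > 0"
    and "X \<in> sp (Omega_pole r1 r2)"
    and "lie_br X A_L_pole = a *\<^sub>R A_L_pole + b *\<^sub>R A_H_pole r1 r2"
    and "lie_br X (A_H_pole r1 r2) = c *\<^sub>R A_L_pole + d *\<^sub>R A_H_pole r1 r2"
  shows "X = (X$2$1) *\<^sub>R A_L_pole + (2 * r1 * X$1$4) *\<^sub>R A_H_pole r1 r2"
proof -
  note defs = matrix_matrix_mult_def sum_4 A_L_pole_def A_H_pole_def
  have L: "(X ** A_L_pole)$i$j - (A_L_pole ** X)$i$j = (a *\<^sub>R A_L_pole + b *\<^sub>R A_H_pole r1 r2)$i$j" for i j
    using assms(4) unfolding lie_br_def by (metis vector_minus_component)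
  have H: "(X ** A_H_pole r1 r2)$i$j - (A_H_pole r1 r2 ** X)$i$j
      = (c *\<^sub>R A_L_pole + d *\<^sub>R A_H_pole r1 r2)$i$j" for i j
    using assms(5) unfolding lie_br_def by (metis vector_minus_component)
  have l11: "X$1$2 + X$2$1 = 0" using L[of 1 1] by (simp add: defs)
  have l12: "X$2$2 - X$1$1 = -a" using L[of 1 2] by (simp add: defs)
  have l21: "X$2$2 - X$1$1 = a" using L[of 2 1] by (simp add: defs)
  have l13: "X$1$4 + X$2$3 = 0" using L[of 1 3] by (simp add: defs)
  have l34: "X$4$4 - X$3$3 = -a" using L[of 3 4] by (simp add: defs)
  have l14: "X$2$4 - X$1$3 = b / (2*r1)" using L[of 1 4] by (simp add: defs)
  have l23: "X$2$4 - X$1$3 = - b / (2*r1)" using L[of 2 3] by (simp add: defs)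
  have l41: "X$4$2 - X$3$1 = b / (2*r2)" using L[of 4 1] by (simp add: defs)
  have l33: "X$3$4 + X$4$3 = 0" using L[of 3 3] by (simp add: defs)
  have h13: "X$1$2 + X$4$3 = 0" using H[of 1 3] r1 by (simp add: defs field_simps)
  have h21: "X$2$4 / (2*r2) + X$3$1 / (2*r1) = c" using H[of 2 1] by (simp add: defs)
  have h43: "- (X$4$2 / (2*r1)) - X$1$3 / (2*r2) = c" using H[of 4 3] by (simp add: defs)
  note s = sp_Omega_pole_entries[OF assms(3)]
  have a0: "a = 0" using l12 l21 by simp
  have diagonal: "X$1$1 = 0" "X$2$2 = 0" "X$3$3 = 0" "X$4$4 = 0"
    using s(1) l12 a0 r1 s(3) l34 r2 by (auto simp: algebra_simps)
  have b0: "b = 0" using l14 l23 r1 by (simp add: field_simps)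
  have x24: "X$2$4 = X$1$3" and x42: "X$4$2 = X$3$1" using l14 l41 b0 by simp_all
  have "X$1$3 / (2*r2) + X$3$1 / (2*r1) = 0" using h21 h43 x24 x42 by simp
  then have "r1 * X$1$3 + r2 * X$3$1 = 0" using r1 r2 by (simp add: field_simps)
  moreover have "r1 * X$1$3 = X$3$1 * r2" using s(2) x42 by simp
  ultimately have x31: "X$3$1 = 0" and x13: "X$1$3 = 0" using r1 r2 by auto
  have "X$2$3 = - X$1$4" using l13 by simp
  then have x41: "X$4$1 = r1 * X$1$4 / r2" using s(4) r2 by (simp add: field_simps)
  have x32: "X$3$2 = - (r1 * X$1$4 / r2)" using s(5) r2 by (simp add: field_simps)
  show ?thesis
    using diagonal x24 x42 x31 x13 x41 x32 l11 l13 l33 h13 r1 r2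
    by (simp add: vec_eq_iff forall_4 A_L_pole_def A_H_pole_def field_simps)
qed

lemma cartan_span_A_pole:
  assumes r1: "r1 > 0" and r2: "r2 > 0"
  shows "cartan_subalgebra (sp (Omega_pole r1 r2)) (span {A_L_pole, A_H_pole r1 r2})"
proof (rule cartan_subalgebra_if_abelian_self_normalizing)
  let ?h = "span {A_L_pole, A_H_pole r1 r2}"
  have h: "X \<in> ?h \<longleftrightarrow> (\<exists>a b. X = a *\<^sub>R A_L_pole + b *\<^sub>R A_H_pole r1 r2)" for X
    by (simp add: span_pair)
  show "subspace ?h" by (rule subspace_span)
  show "?h \<subseteq> sp (Omega_pole r1 r2)" using span_A_pole_in_sp[OF r1 r2] h by auto
  show "lie_br X Y = 0" if "X \<in> ?h" "Y \<in> ?h" for X Y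
    using that lie_br_span_A_pole[OF r1 r2] h by auto
  show "X \<in> ?h" if X: "X \<in> sp (Omega_pole r1 r2)" and normalizes: "\<forall>Y\<in>?h. lie_br X Y \<in> ?h"
    for X
  proof -
    have "A_L_pole \<in> ?h" "A_H_pole r1 r2 \<in> ?h" by (auto intro: span_base)
    then obtain a b c d where
      "lie_br X A_L_pole = a *\<^sub>R A_L_pole + b *\<^sub>R A_H_pole r1 r2"
      "lie_br X (A_H_pole r1 r2) = c *\<^sub>R A_L_pole + d *\<^sub>R A_H_pole r1 r2"
      using normalizes h by meson
    then show ?thesis using normalizer_A_pole[OF r1 r2 X] h by blast
  qed
qed

lemma nondegenerate_at_pole:
  assumes "r1 > 0" "r2 > 0" "p \<in> {Npt, Spt}"
  shows "nondegenerate r1 r2 p"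
  using cartan_span_A_pole[OF assms(1,2)] A_op_at_pole[OF assms]
  by (simp add: nondegenerate_def Omega_at_pole[OF assms(3)])

subsection \<open>The focus-focus eigenvalues\<close>

lemma eigenvalue_of_focus_focus_system:
  fixes w :: "complex^4" and k1 k2 e :: complex
  assumes k: "k1 * k2 = 1" and "w \<noteq> 0"
    and E1: "- w$2 + k1 * w$4 = e * w$1"
    and E2: "w$1 - k1 * w$3 = e * w$2"
    and E3: "- k2 * w$2 - w$4 = e * w$3"
    and E4: "k2 * w$1 + w$3 = e * w$4"
  shows "e \<in> {Complex 1 1, Complex 1 (-1), Complex (-1) 1, Complex (-1) (-1)}"
proof -
  txt \<open>In the coordinates w1 \<plusminus> i w2, w3 \<plusminus> i w4 the system splits into two 2x2 blocks,
    on which (e - i)^2 = 1 and (e + i)^2 = 1 respectively.\<close>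
  have ii: "\<i> * \<i> = (-1::complex)" by simp
  define ph where "ph = w$1 + \<i> * w$2"
  define ps where "ps = w$3 + \<i> * w$4"
  define ph' where "ph' = w$1 - \<i> * w$2"
  define ps' where "ps' = w$3 - \<i> * w$4"
  have P1: "(e - \<i>) * ph = - \<i> * k1 * ps" unfolding ph_def ps_def using E1 E2 ii by algebra
  have P2: "(e - \<i>) * ps = \<i> * k2 * ph" unfolding ph_def ps_def using E3 E4 ii by algebra
  have P3: "(e + \<i>) * ph' = \<i> * k1 * ps'" unfolding ph'_def ps'_def using E1 E2 ii by algebra
  have P4: "(e + \<i>) * ps' = - \<i> * k2 * ph'" unfolding ph'_def ps'_def using E3 E4 ii by algebra
  have Q: "((e - \<i>)^2 - 1) * ph = 0" "((e - \<i>)^2 - 1) * ps = 0"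
      "((e + \<i>)^2 - 1) * ph' = 0" "((e + \<i>)^2 - 1) * ps' = 0"
    using P1 P2 P3 P4 k ii by algebra+
  have "(e - \<i>)^2 = 1 \<or> (e + \<i>)^2 = 1"
  proof (rule ccontr)
    assume "\<not> ((e - \<i>)^2 = 1 \<or> (e + \<i>)^2 = 1)"
    then have "ph = 0" "ps = 0" "ph' = 0" "ps' = 0" using Q by auto
    then have "w$1 = 0" "w$2 = 0" "w$3 = 0" "w$4 = 0"
      unfolding ph_def ps_def ph'_def ps'_def by (auto simp: algebra_simps)
    then show False using \<open>w \<noteq> 0\<close> by (simp add: vec_eq_iff forall_4)
  qed
  then have "e - \<i> = 1 \<or> e - \<i> = -1 \<or> e + \<i> = 1 \<or> e + \<i> = -1"
    by (auto simp: power2_eq_1_iff)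
  then show ?thesis by (auto simp: complex_eq_iff)
qed

lemma eigenvals_A_pole:
  assumes r1: "r1 > 0" and r2: "r2 > 0"
  shows "eigenvals (A_L_pole + (2 * sqrt (r1 * r2)) *\<^sub>R A_H_pole r1 r2)
    = {Complex 1 1, Complex 1 (-1), Complex (-1) 1, Complex (-1) (-1)}"
    (is "eigenvals ?B = ?E")
proof -
  define s where "s = sqrt (r1 * r2)"
  have ss: "s * s = r1 * r2" and s0: "s > 0" using r1 r2 by (simp_all add: s_def)
  have k: "complex_of_real (s / r1) * complex_of_real (s / r2) = 1"
    using ss r1 r2 by (simp flip: of_real_mult)
  have eigen: "e \<in> eigenvals ?B \<longleftrightarrow> (\<exists>w::complex^4. w \<noteq> 0 \<and>
      - w$2 + of_real (s / r1) * w$4 = e * w$1 \<and>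
      w$1 - of_real (s / r1) * w$3 = e * w$2 \<and>
      - of_real (s / r2) * w$2 - w$4 = e * w$3 \<and>
      of_real (s / r2) * w$1 + w$3 = e * w$4)" for e
    using r1 r2
    by (simp add: eigenvals_def s_def vec_eq_iff forall_4 sum_4 A_L_pole_def A_H_pole_def)
  have nonzero: "(vector [a, b, c, d] :: complex^4) \<noteq> 0" if "a \<noteq> 0" for a b c d
    using that by (metis vector_4_nth(1) zero_index)
  show ?thesis
  proof
    show "eigenvals ?B \<subseteq> ?E"
      using eigen eigenvalue_of_focus_focus_system[OF k] by blast
  next
    have "\<exists>w::complex^4. w \<noteq> 0 \<and>
      - w$2 + of_real (s / r1) * w$4 = Complex \<sigma> \<tau> * w$1 \<and>
      w$1 - of_real (s / r1) * w$3 = Complex \<sigma> \<tau> * w$2 \<and>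
      - of_real (s / r2) * w$2 - w$4 = Complex \<sigma> \<tau> * w$3 \<and>
      of_real (s / r2) * w$1 + w$3 = Complex \<sigma> \<tau> * w$4"
      if "\<sigma> = 1 \<or> \<sigma> = -1" "\<tau> = 1 \<or> \<tau> = -1" for \<sigma> \<tau> :: real
      using that r1 r2 ss s0
      by (intro exI[of _ "vector [of_real r2, - \<i> * of_real (\<tau> * r2),
                                   \<i> * of_real (\<sigma> * \<tau> * s), of_real (\<sigma> * s)]"])
        (auto simp: complex_eq_iff field_simps nonzero)
    then show "?E \<subseteq> eigenvals ?B" using eigen by auto
  qed
qed

lemma focus_focus_at_pole:
  assumes "r1 > 0" "r2 > 0" "p \<in> {Npt, Spt}"
  shows "focus_focus r1 r2 p"
  unfolding focus_focus_def A_op_at_pole[OF assms]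
proof (intro conjI exI)
  show "nondegenerate r1 r2 p" using nondegenerate_at_pole[OF assms] .
  show "eigenvals (1 *\<^sub>R A_L_pole + (2 * sqrt (r1 * r2)) *\<^sub>R A_H_pole r1 r2)
      = {Complex 1 1, Complex 1 (- 1), Complex (- 1) 1, Complex (- 1) (- 1)}"
    using eigenvals_A_pole[OF assms(1,2)] by simp
qed simp_all

lemma rank_dF_off_poles:
  assumes "r1 > 0" "r2 > 0" "p \<in> M - {Npt, Spt}"
  shows "rank_dF r1 r2 p = 2"
proof (cases "zc p = 0")
  case True
  then show ?thesis using rank_dF_on_equator assms(1) by blast
next
  case False
  then show ?thesis using rank_dF_off_equator assms by blast
qed

theorem proposition4p4:
  fixes \<rho>1 \<rho>2 :: real
  assumes "\<rho>1 > 0" and "\<rho>2 > 0"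
  shows "{p \<in> M. rank_dF \<rho>1 \<rho>2 p < 2} = {Npt, Spt}
     \<and> fixed_point \<rho>1 \<rho>2 Npt \<and> fixed_point \<rho>1 \<rho>2 Spt
     \<and> nondegenerate \<rho>1 \<rho>2 Npt \<and> focus_focus \<rho>1 \<rho>2 Npt
     \<and> nondegenerate \<rho>1 \<rho>2 Spt \<and> focus_focus \<rho>1 \<rho>2 Spt
     \<and> (\<forall>p \<in> M - {Npt, Spt}. rank_dF \<rho>1 \<rho>2 p = 2)"
proof -
  have poles: "Npt \<in> {Npt, Spt}" "Spt \<in> {Npt, Spt}" by simp_all
  have regular: "\<forall>p \<in> M - {Npt, Spt}. rank_dF \<rho>1 \<rho>2 p = 2"
    using rank_dF_off_poles[OF assms] by blast
  moreover have "{p \<in> M. rank_dF \<rho>1 \<rho>2 p < 2} = {Npt, Spt}"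
  proof
    show "{p \<in> M. rank_dF \<rho>1 \<rho>2 p < 2} \<subseteq> {Npt, Spt}" using regular by force
    show "{Npt, Spt} \<subseteq> {p \<in> M. rank_dF \<rho>1 \<rho>2 p < 2}"
      using rank_dF_at_pole pole_coords(1) by fastforce
  qed
  moreover have "fixed_point \<rho>1 \<rho>2 p" if "p \<in> {Npt, Spt}" for p
    using bdiff_at_pole[OF that] by (simp add: fixed_point_def)
  ultimately show ?thesis
    using poles nondegenerate_at_pole[OF assms] focus_focus_at_pole[OF assms] by simp
qed

end
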